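(* Let $X$ be a Banach space, $D\subset X$ closed, bounded and convex, and $\tau$ a locally convex topology on $D$ containing the relative weak topology of $D$. Let $C$ be a convex subset of $D$, $\varepsilon>0$, $n,k\in\mathbb{N}$, $\lambda\in S^+_{\ell_1^n}$, $\{x_1,\dots,x_k\}\subset X$, and let $(\widetilde O_i)_{i=1}^n$ be nonempty sets in $\tau|_C$. Then for each $1\le i\le n$ there is a nonempty $\tau|_{\widetilde O_i}$-open set $O_i$ such that $$\operatorname{diam}\Big(\sum_{i=1}^n\lambda(i)O_i\Big)\le SD(\lambda,(O_i))+\varepsilon$$ and $$d\Big(\{x_1,\dots,x_k\},\sum_{i=1}^n\lambda(i)O_i\Big)\ge \frac{SD(\lambda,(O_i))}{2}-\varepsilon.$$
   Context: $\tau|_C$ is the topology induced by $\tau$ on $C$; locally convex means having a basis of convex open sets. $S^+_{\ell_1^n}=\{\lambda\in\mathbb{R}^n:\lambda(i)\ge0,\ \sum_i\lambda(i)=1\}$. Sums of sets are Minkowski sums. For nonempty sets $O_1,\dots,O_n\in\tau|_C$ and $\lambda\in S^+_{\ell_1^n}$, the sub-diameter is $$SD(\lambda,(O_i))=\inf\Big\{\operatorname{diam}\Big(\sum_i\lambda(i)U_i\Big): U_i \text{ nonempty and } U_i\in\tau|_{O_i}\text{ for }1\le i\le n\Big\}.$$ $d(A,B)=\inf\{\|a-b\|:a\in A,b\in B\}$. *)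

theory Defs
  imports "HOL-Analysis.Analysis"
begin

definition weak_topology :: "'a::real_normed_vector topology" where
  "weak_topology = topology_generated_by
     {f -` V | f V. bounded_linear (f :: 'a \<Rightarrow> real) \<and> open V}"

definition locally_convex_top :: "'a::real_vector topology \<Rightarrow> bool" where
  "locally_convex_top T \<longleftrightarrow>
     (\<forall>U x. openin T U \<and> x \<in> U \<longrightarrow> (\<exists>V. openin T V \<and> convex V \<and> x \<in> V \<and> V \<subseteq> U))"

text \<open>Minkowski combination  sum_{i<n} lam(i) U_i  (indices 0..n-1).\<close>
definition msum :: "nat \<Rightarrow> (nat \<Rightarrow> real) \<Rightarrow> (nat \<Rightarrow> 'a::real_vector set) \<Rightarrow> 'a set" where
  "msum n lam U = {(\<Sum>i<n. lam i *\<^sub>R u i) | u. \<forall>i<n. u i \<in> U i}"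

definition simplex_l1 :: "nat \<Rightarrow> (nat \<Rightarrow> real) set" where
  "simplex_l1 n = {lam. (\<forall>i<n. lam i \<ge> 0) \<and> (\<Sum>i<n. lam i) = 1}"

definition SD :: "'a::real_normed_vector topology \<Rightarrow> nat \<Rightarrow> (nat \<Rightarrow> real) \<Rightarrow> (nat \<Rightarrow> 'a set) \<Rightarrow> real" where
  "SD T n lam Os = Inf {diameter (msum n lam U) | U.
      \<forall>i<n. U i \<noteq> {} \<and> openin (subtopology T (Os i)) (U i)}"

end

theory Submission
  imports Defs
begin

(* Let sigma be the supremum of SD over all families (B_i) of nonempty relatively open subsets
   B_i of the given sets. SD can only grow when the B_i are shrunk, so there is such a family U
   with SD(U) > sigma - eps and diam(sum lam_i U_i) < SD(U) + eps; every further refinement V then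
   satisfies diam(sum lam_i V_i) <= SD(V) + eps and SD(V) <= sigma.
   To move away from a point x: diam(sum lam_i V_i) >= SD(V) > sigma - eps, so sum lam_i V_i
   contains a point y = sum lam_i u_i with |y - x| > (sigma - eps)/2. A Hahn-Banach functional f
   norming y - x cuts each V_i down to the weakly open slab {f > f(u_i) - delta} around u_i, and on
   the new Minkowski combination f stays large enough to keep it (sigma - eps)/2 away from x.
   Doing this for x_1, ..., x_k in turn proves the lemma. *)

section \<open>Norming functionals via Hahn--Banach\<close>

(* A linear functional on a subspace, dominated by the norm, is encoded by its graph in X x R:
   graphs are plain sets, so Zorn's lemma applies to them directly. *)
definition norm_dominated_graph :: "('a::real_normed_vector \<times> real) set \<Rightarrow> bool" where
  "norm_dominated_graph G \<longleftrightarrow> subspace G \<and> (\<forall>(x, a)\<in>G. a \<le> norm x)"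

lemma norm_dominated_graph_le:
  "norm_dominated_graph G \<Longrightarrow> (x, a) \<in> G \<Longrightarrow> a \<le> norm x"
  unfolding norm_dominated_graph_def by auto

lemma norm_dominated_graph_unique:
  assumes G: "norm_dominated_graph G" and "(x, a) \<in> G" "(x, b) \<in> G"
  shows "a = b"
proof -
  have "(x, a) - (x, b) \<in> G" "(x, b) - (x, a) \<in> G"
    using assms subspace_diff unfolding norm_dominated_graph_def by blast+
  then have "(0, a - b) \<in> G" "(0, b - a) \<in> G"
    by simp_all
  then have "a - b \<le> 0" "b - a \<le> 0"
    using norm_dominated_graph_le[OF G] by (metis norm_zero)+
  then show ?thesis
    by simp
qed

lemma norm_dominated_graph_extension_value:
  assumes "norm_dominated_graph G"
  obtains c where "\<And>x a. (x, a) \<in> G \<Longrightarrow> a + c \<le> norm (x + z)"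
    and "\<And>y b. (y, b) \<in> G \<Longrightarrow> b - c \<le> norm (y - z)"
proof -
  have sub: "subspace G"
    using assms unfolding norm_dominated_graph_def by blast
  have sep: "b - norm (y - z) \<le> norm (x + z) - a" if "(x, a) \<in> G" "(y, b) \<in> G" for x a y b
  proof -
    have "(x + y, a + b) \<in> G"
      using subspace_add[OF sub that] by simp
    then have "a + b \<le> norm (x + y)"
      by (rule norm_dominated_graph_le[OF assms])
    also have "\<dots> \<le> norm (x + z) + norm (y - z)"
      using norm_triangle_ineq[of "x + z" "y - z"] by simp
    finally show ?thesis by simp
  qed
  define c where "c = Sup {b - norm (y - z) | y b. (y, b) \<in> G}"
  have zero: "(0, 0) \<in> G"
    using subspace_0[OF sub] by (simp add: zero_prod_def)
  have "a + c \<le> norm (x + z)" if "(x, a) \<in> G" for x a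
  proof -
    have "c \<le> norm (x + z) - a"
      unfolding c_def using that sep zero by (intro cSup_least) auto
    then show ?thesis by simp
  qed
  moreover have "b - c \<le> norm (y - z)" if "(y, b) \<in> G" for y b
  proof -
    have "b - norm (y - z) \<le> c"
      unfolding c_def using that sep[OF zero] by (intro cSup_upper bdd_aboveI) auto
    then show ?thesis by simp
  qed
  ultimately show ?thesis
    using that by blast
qed

lemma norm_dominated_graph_extend:
  assumes G: "norm_dominated_graph G"
  obtains c where "norm_dominated_graph (span (insert (z, c) G))"
proof -
  have sub: "subspace G"
    using G unfolding norm_dominated_graph_def by blast
  obtain c where above: "\<And>x a. (x, a) \<in> G \<Longrightarrow> a + c \<le> norm (x + z)"
    and below: "\<And>y b. (y, b) \<in> G \<Longrightarrow> b - c \<le> norm (y - z)"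
    using norm_dominated_graph_extension_value[OF G] by blast
  have "a \<le> norm x" if xa: "(x, a) \<in> span (insert (z, c) G)" for x a
  proof -
    obtain t where "(x, a) - t *\<^sub>R (z, c) \<in> span G"
      using xa unfolding span_insert by blast
    then have t: "(x - t *\<^sub>R z, a - t * c) \<in> G"
      using span_eq_iff[THEN iffD2, OF sub] by simp
    consider (zero) "t = 0" | (pos) "t > 0" | (neg) "t < 0"
      by linarith
    then show ?thesis
    proof cases
      case zero
      then show ?thesis
        using norm_dominated_graph_le[OF G t] by simp
    next
      case pos
      have "(inverse t *\<^sub>R (x - t *\<^sub>R z), inverse t * (a - t * c)) \<in> G"
        using subspace_scale[OF sub t, of "inverse t"] by simp
      from above[OF this] pos have "inverse t * a \<le> inverse t * norm x"
        by (simp add: algebra_simps)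
      then show ?thesis
        using pos by simp
    next
      case neg
      have "(- inverse t *\<^sub>R (x - t *\<^sub>R z), - inverse t * (a - t * c)) \<in> G"
        using subspace_scale[OF sub t, of "- inverse t"] by simp
      from below[OF this] neg have "- inverse t * a \<le> - inverse t * norm x"
        by (simp add: algebra_simps)
      then show ?thesis
        using neg by (simp add: mult_le_cancel_left)
    qed
  qed
  then show ?thesis
    by (intro that) (auto simp: norm_dominated_graph_def)
qed

lemma norm_dominated_graph_Union_chain:
  assumes "C \<noteq> {}" and dom: "\<And>G. G \<in> C \<Longrightarrow> norm_dominated_graph G"
    and chain: "\<And>G H. G \<in> C \<Longrightarrow> H \<in> C \<Longrightarrow> G \<subseteq> H \<or> H \<subseteq> G"
  shows "norm_dominated_graph (\<Union>C)"
proof -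
  have sub: "\<And>G. G \<in> C \<Longrightarrow> subspace G"
    using dom unfolding norm_dominated_graph_def by blast
  have "subspace (\<Union>C)"
  proof (rule subspaceI)
    show "0 \<in> \<Union>C"
      using assms(1) sub subspace_0 by blast
    show "p + q \<in> \<Union>C" if pq: "p \<in> \<Union>C" "q \<in> \<Union>C" for p q
    proof -
      obtain G H where "G \<in> C" "H \<in> C" "p \<in> G" "q \<in> H"
        using pq by blast
      then have "p \<in> G \<union> H" "q \<in> G \<union> H" "G \<union> H \<in> C"
        using chain[of G H] by (auto simp: sup_absorb1 sup_absorb2)
      then show ?thesis
        using sub subspace_add by blast
    qed
    show "t *\<^sub>R p \<in> \<Union>C" if "p \<in> \<Union>C" for t p
      using that sub subspace_scale by blast
  qed
  then show ?thesis
    using dom unfolding norm_dominated_graph_def by blast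
qed

lemma norm_dominated_graph_total_extension:
  assumes "norm_dominated_graph G"
  obtains M where "norm_dominated_graph M" "G \<subseteq> M" "\<And>x. \<exists>a. (x, a) \<in> M"
proof -
  let ?A = "{M. norm_dominated_graph M \<and> G \<subseteq> M}"
  have "\<exists>M\<in>?A. \<forall>M'\<in>?A. M \<subseteq> M' \<longrightarrow> M' = M"
  proof (rule subset_Zorn_nonempty)
    show "?A \<noteq> {}"
      using assms by blast
    show "\<Union>C \<in> ?A" if "C \<noteq> {}" "subset.chain ?A C" for C
    proof -
      have C: "C \<subseteq> ?A" "\<And>M M'. M \<in> C \<Longrightarrow> M' \<in> C \<Longrightarrow> M \<subseteq> M' \<or> M' \<subseteq> M"
        using that(2) unfolding subset.chain_def by blast+
      then have "norm_dominated_graph (\<Union>C)"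
        by (intro norm_dominated_graph_Union_chain[OF that(1)]) auto
      moreover have "G \<subseteq> \<Union>C"
        using C(1) that(1) by blast
      ultimately show ?thesis
        by simp
    qed
  qed
  then obtain M where "M \<in> ?A" and max: "\<forall>M'\<in>?A. M \<subseteq> M' \<longrightarrow> M' = M"
    by (rule bexE)
  then have M: "norm_dominated_graph M" "G \<subseteq> M"
    by simp_all
  have maximal: "M' = M" if "norm_dominated_graph M'" "M \<subseteq> M'" for M'
    using max that M(2) by auto
  have "\<exists>a. (x, a) \<in> M" for x
  proof -
    obtain c where ext: "norm_dominated_graph (span (insert (x, c) M))"
      by (rule norm_dominated_graph_extend[OF M(1)])
    have "M \<subseteq> span (insert (x, c) M)"
      using span_superset by blast
    then have "span (insert (x, c) M) = M"
      by (rule maximal[OF ext])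
    moreover have "(x, c) \<in> span (insert (x, c) M)"
      by (simp add: span_base)
    ultimately show ?thesis
      by auto
  qed
  then show ?thesis
    using that M by simp
qed

lemma norming_functional_exists:
  fixes y :: "'a::real_normed_vector"
  obtains f where "bounded_linear f" "f y = norm y" "\<And>x. \<bar>f x\<bar> \<le> norm x"
proof -
  have "norm_dominated_graph (span {(y, norm y)})"
    unfolding norm_dominated_graph_def
  proof (intro conjI subspace_span)
    show "\<forall>(x, a)\<in>span {(y, norm y)}. a \<le> norm x"
      unfolding span_singleton by (auto intro: mult_right_mono)
  qed
  then obtain M where M: "norm_dominated_graph M" "(y, norm y) \<in> M"
    and total: "\<And>x. \<exists>a. (x, a) \<in> M"
    by (rule norm_dominated_graph_total_extension) (auto intro: span_base)
  define f where "f x = (THE a. (x, a) \<in> M)" for x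
  have f_eq: "f x = a" if "(x, a) \<in> M" for x a
    unfolding f_def using that by (auto intro: the_equality norm_dominated_graph_unique[OF M(1)])
  have graph: "(x, f x) \<in> M" for x
  proof -
    obtain a where "(x, a) \<in> M"
      using total by blast
    then show ?thesis
      using f_eq by simp
  qed
  have sub: "subspace M"
    using M(1) unfolding norm_dominated_graph_def by blast
  have add: "f (x + x') = f x + f x'" for x x'
    using f_eq subspace_add[OF sub graph[of x] graph[of x']] by simp
  have scale: "f (t *\<^sub>R x) = t * f x" for t x
    using f_eq subspace_scale[OF sub graph[of x], of t] by simp
  have le: "f x \<le> norm x" for x
    using norm_dominated_graph_le[OF M(1) graph] .
  have abs_le: "\<bar>f x\<bar> \<le> norm x" for x
    using le[of x] le[of "- x"] scale[of "-1" x] by simp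
  have "bounded_linear f"
    by (rule bounded_linear_intro[of f 1]) (use add scale abs_le in auto)
  then show ?thesis
    using that f_eq[OF M(2)] abs_le by blast
qed

section \<open>Open refinements and the sub-diameter\<close>

definition open_refinement ::
    "'a topology \<Rightarrow> nat \<Rightarrow> (nat \<Rightarrow> 'a set) \<Rightarrow> (nat \<Rightarrow> 'a set) \<Rightarrow> bool" where
  "open_refinement T n A B \<longleftrightarrow> (\<forall>i<n. B i \<noteq> {} \<and> openin (subtopology T (A i)) (B i))"

lemma SD_eq_Inf_open_refinement:
  "SD T n lam A = Inf {diameter (msum n lam U) | U. open_refinement T n A U}"
  unfolding SD_def open_refinement_def by simp

lemma open_refinement_subset: "open_refinement T n A B \<Longrightarrow> i < n \<Longrightarrow> B i \<subseteq> A i"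
  unfolding open_refinement_def by (metis openin_subset topspace_subtopology le_infE)

lemma open_refinement_topspace: "open_refinement T n A B \<Longrightarrow> i < n \<Longrightarrow> B i \<subseteq> topspace T"
  unfolding open_refinement_def by (metis openin_subset topspace_subtopology le_infE)

lemma open_refinement_self_iff:
  "open_refinement T n A A \<longleftrightarrow> (\<forall>i<n. A i \<noteq> {} \<and> A i \<subseteq> topspace T)"
  unfolding open_refinement_def by (simp add: openin_subtopology_refl)

lemma open_refinement_self: "open_refinement T n A B \<Longrightarrow> open_refinement T n B B"
  using open_refinement_topspace[of T n A B] unfolding open_refinement_def
  by (auto simp: openin_subtopology_refl)

lemma openin_subtopology_trans:
  assumes "openin (subtopology T A) B" "openin (subtopology T B) E"
  shows "openin (subtopology T A) E"
proof -
  have "subtopology (subtopology T A) B = subtopology T B"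
    using openin_imp_subset[OF assms(1)] by (simp add: subtopology_subtopology inf_absorb2)
  then show ?thesis
    using openin_trans_full[of "subtopology T A" B E] assms by simp
qed

lemma open_refinement_trans:
  "open_refinement T n A B \<Longrightarrow> open_refinement T n B E \<Longrightarrow> open_refinement T n A E"
  unfolding open_refinement_def using openin_subtopology_trans by blast

lemma msum_mono: "(\<And>i. i < n \<Longrightarrow> B i \<subseteq> A i) \<Longrightarrow> msum n lam B \<subseteq> msum n lam A"
  unfolding msum_def by blast

lemma msum_open_refinement_subset: "open_refinement T n A B \<Longrightarrow> msum n lam B \<subseteq> msum n lam A"
  using open_refinement_subset[of T n A B] by (simp add: msum_mono)

lemma msum_nonempty:
  assumes "\<And>i. i < n \<Longrightarrow> A i \<noteq> {}"
  shows "msum n lam A \<noteq> {}"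
proof -
  define u where "u i = (SOME x. x \<in> A i)" for i
  have "\<forall>i<n. u i \<in> A i"
    using assms unfolding u_def by (simp add: some_in_eq)
  then show ?thesis
    unfolding msum_def by blast
qed

lemma msum_subset_convex:
  assumes "lam \<in> simplex_l1 n" "convex D" "\<And>i. i < n \<Longrightarrow> A i \<subseteq> D"
  shows "msum n lam A \<subseteq> D"
proof
  fix z assume "z \<in> msum n lam A"
  then obtain u where u: "z = (\<Sum>i<n. lam i *\<^sub>R u i)" "\<forall>i<n. u i \<in> A i"
    unfolding msum_def by blast
  show "z \<in> D"
    unfolding u(1) by (rule convex_sum) (use assms u(2) in \<open>auto simp: simplex_l1_def\<close>)
qed

lemma bounded_msum_open_refinement:
  "bounded (msum n lam A) \<Longrightarrow> open_refinement T n A B \<Longrightarrow> bounded (msum n lam B)"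
  by (rule bounded_subset[OF _ msum_open_refinement_subset])

lemma bdd_below_diameters_open_refinement:
  assumes "bounded (msum n lam A)"
  shows "bdd_below {diameter (msum n lam U) | U. open_refinement T n A U}"
proof (rule bdd_belowI)
  fix d assume "d \<in> {diameter (msum n lam U) | U. open_refinement T n A U}"
  then obtain U where U: "open_refinement T n A U" "d = diameter (msum n lam U)"
    by blast
  then show "0 \<le> d"
    using diameter_ge_0[OF bounded_msum_open_refinement[OF assms U(1)]] by simp
qed

lemma SD_le_diameter:
  assumes "open_refinement T n A A" "bounded (msum n lam A)"
  shows "SD T n lam A \<le> diameter (msum n lam A)"
proof -
  have "diameter (msum n lam A) \<in> {diameter (msum n lam U) | U. open_refinement T n A U}"
    using assms(1) by blast
  then show ?thesis
    unfolding SD_eq_Inf_open_refinement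
    using assms(2) by (rule cInf_lower[OF _ bdd_below_diameters_open_refinement])
qed

lemma SD_mono_open_refinement:
  assumes "bounded (msum n lam A)" "open_refinement T n A B"
  shows "SD T n lam A \<le> SD T n lam B"
  unfolding SD_eq_Inf_open_refinement
proof (rule cInf_superset_mono)
  show "{diameter (msum n lam U) | U. open_refinement T n B U} \<noteq> {}"
    using open_refinement_self[OF assms(2)] by blast
  show "bdd_below {diameter (msum n lam U) | U. open_refinement T n A U}"
    using assms(1) by (rule bdd_below_diameters_open_refinement)
  show "{diameter (msum n lam U) | U. open_refinement T n B U}
      \<subseteq> {diameter (msum n lam U) | U. open_refinement T n A U}"
    using open_refinement_trans[OF assms(2)] by blast
qed

lemma SD_lessE:
  assumes "open_refinement T n A A" "SD T n lam A < c"
  obtains U where "open_refinement T n A U" "diameter (msum n lam U) < c"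
proof -
  have "\<exists>d\<in>{diameter (msum n lam U) | U. open_refinement T n A U}. d < c"
    using assms unfolding SD_eq_Inf_open_refinement by (intro cInf_lessD) blast+
  then show ?thesis
    using that by blast
qed

section \<open>Moving Minkowski combinations away from points\<close>

lemma openin_weak_topology_halfspace:
  fixes f :: "'a::real_normed_vector \<Rightarrow> real"
  assumes "bounded_linear f"
  shows "openin weak_topology {x. c < f x}"
proof -
  have "{x. c < f x} = f -` {c<..}"
    by auto
  then show ?thesis
    unfolding weak_topology_def using assms
    by (metis (mono_tags, lifting) CollectI open_greaterThan topology_generated_by_Basis)
qed

lemma exists_far_point_of_diameter:
  fixes S :: "'a::real_normed_vector set"
  assumes "S \<noteq> {}" "d < diameter S"
  shows "\<exists>y\<in>S. d / 2 < dist y x"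
proof (rule ccontr)
  assume "\<not> ?thesis"
  then have near: "dist y x \<le> d / 2" if "y \<in> S" for y
    using that by auto
  have "diameter S \<le> d"
  proof (rule diameter_le)
    show "S \<noteq> {} \<or> 0 \<le> d"
      using assms(1) by blast
    show "norm (y - y') \<le> d" if "y \<in> S" "y' \<in> S" for y y'
      using dist_triangle2[of y y' x] near[OF that(1)] near[OF that(2)] by (simp add: dist_norm)
  qed
  then show False
    using assms(2) by simp
qed

lemma linear_convex_combination_mono:
  fixes f :: "'a::real_vector \<Rightarrow> real"
  assumes "linear f" "lam \<in> simplex_l1 n" "\<And>i. i < n \<Longrightarrow> f (u i) - e \<le> f (v i)"
  shows "f (\<Sum>i<n. lam i *\<^sub>R u i) - e \<le> f (\<Sum>i<n. lam i *\<^sub>R v i)"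
proof -
  have lam_nonneg: "\<And>i. i < n \<Longrightarrow> 0 \<le> lam i" and lam_sum: "(\<Sum>i<n. lam i) = 1"
    using assms(2) unfolding simplex_l1_def by auto
  have f_comb: "f (\<Sum>i<n. lam i *\<^sub>R w i) = (\<Sum>i<n. lam i * f (w i))" for w
    using assms(1) by (simp add: linear_sum linear_scale)
  have "f (\<Sum>i<n. lam i *\<^sub>R u i) - e = (\<Sum>i<n. lam i * (f (u i) - e))"
    using lam_sum unfolding f_comb
    by (simp add: right_diff_distrib sum_subtractf flip: sum_distrib_right)
  also have "\<dots> \<le> (\<Sum>i<n. lam i * f (v i))"
    using lam_nonneg assms(3) by (intro sum_mono mult_left_mono) auto
  also have "\<dots> = f (\<Sum>i<n. lam i *\<^sub>R v i)"
    unfolding f_comb ..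
  finally show ?thesis .
qed

lemma open_refinement_away_from_point:
  fixes D :: "'a::real_normed_vector set"
  assumes weak: "\<forall>U. openin (subtopology weak_topology D) U \<longrightarrow> openin T U"
    and lam: "lam \<in> simplex_l1 n"
    and AD: "\<And>i. i < n \<Longrightarrow> A i \<subseteq> D"
    and y: "y \<in> msum n lam A" and r: "r < dist y x"
  obtains B where "open_refinement T n A B" "\<And>z. z \<in> msum n lam B \<Longrightarrow> r < dist z x"
proof -
  obtain u where y_eq: "y = (\<Sum>i<n. lam i *\<^sub>R u i)" and u: "\<And>i. i < n \<Longrightarrow> u i \<in> A i"
    using y unfolding msum_def by blast
  obtain f where f: "bounded_linear f" "f (y - x) = norm (y - x)" "\<And>w. \<bar>f w\<bar> \<le> norm w"
    using norming_functional_exists[of "y - x"] by blast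
  define e where "e = (dist y x - r) / 2"
  have e: "e > 0"
    using r unfolding e_def by simp
  define B where "B i = A i \<inter> {v. f (u i) - e < f v}" for i
  have "open_refinement T n A B"
    unfolding open_refinement_def
  proof (intro allI impI conjI)
    fix i assume i: "i < n"
    show "B i \<noteq> {}"
      using u[OF i] e unfolding B_def by auto
    have "openin T (D \<inter> {v. f (u i) - e < f v})"
      using weak openin_subtopology_Int2[OF openin_weak_topology_halfspace[OF f(1)]] by blast
    moreover have "B i = (D \<inter> {v. f (u i) - e < f v}) \<inter> A i"
      using AD[OF i] unfolding B_def by blast
    ultimately show "openin (subtopology T (A i)) (B i)"
      unfolding openin_subtopology by blast
  qed
  moreover have "r < dist z x" if z: "z \<in> msum n lam B" for z
  proof -
    obtain v where z_eq: "z = (\<Sum>i<n. lam i *\<^sub>R v i)" and v: "\<And>i. i < n \<Longrightarrow> v i \<in> B i"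
      using z unfolding msum_def by blast
    have "f y - e \<le> f z"
      unfolding y_eq z_eq using bounded_linear.linear[OF f(1)] lam
    proof (rule linear_convex_combination_mono)
      show "f (u i) - e \<le> f (v i)" if "i < n" for i
        using v[OF that] unfolding B_def by simp
    qed
    moreover have "f (y - x) = f y - f x" "f (z - x) = f z - f x"
      using f(1) by (simp_all add: linear_diff bounded_linear.linear)
    moreover have "f (z - x) \<le> dist z x"
      using f(3)[of "z - x"] by (simp add: dist_norm)
    ultimately show ?thesis
      using f(2) r unfolding e_def dist_norm by argo
  qed
  ultimately show ?thesis
    using that by blast
qed

lemma open_refinement_SD_almost_stable:
  assumes A: "open_refinement T n A A" "bounded (msum n lam A)" and \<epsilon>: "\<epsilon> > 0"
  obtains U s where "open_refinement T n A U" "s < SD T n lam U"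
    "\<And>V. open_refinement T n U V \<Longrightarrow> SD T n lam V \<le> s + \<epsilon>"
    "\<And>V. open_refinement T n U V \<Longrightarrow> diameter (msum n lam V) \<le> SD T n lam V + \<epsilon>"
proof -
  let ?R = "{B. open_refinement T n A B}"
  define \<sigma> where "\<sigma> = (SUP B\<in>?R. SD T n lam B)"
  have bounded: "bounded (msum n lam B)" if "open_refinement T n A B" for B
    using A(2) that by (rule bounded_msum_open_refinement)
  have "SD T n lam B \<le> diameter (msum n lam A)" if "open_refinement T n A B" for B
  proof -
    have "SD T n lam B \<le> diameter (msum n lam B)"
      using open_refinement_self[OF that] bounded[OF that] by (rule SD_le_diameter)
    also have "\<dots> \<le> diameter (msum n lam A)"
      using msum_open_refinement_subset[OF that] A(2) by (rule diameter_subset)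
    finally show ?thesis .
  qed
  then have bdd: "bdd_above ((\<lambda>B. SD T n lam B) ` ?R)"
    by (intro bdd_aboveI2) blast
  have SD_le_\<sigma>: "SD T n lam B \<le> \<sigma>" if "open_refinement T n A B" for B
    unfolding \<sigma>_def using that bdd by (intro cSUP_upper) auto
  have "\<sigma> - \<epsilon> < \<sigma>"
    using \<epsilon> by simp
  then obtain B0 where B0: "open_refinement T n A B0" "\<sigma> - \<epsilon> < SD T n lam B0"
    unfolding \<sigma>_def using less_cSUP_iff[OF _ bdd] A(1) by blast
  obtain U where U: "open_refinement T n B0 U" "diameter (msum n lam U) < SD T n lam B0 + \<epsilon>"
    using SD_lessE[OF open_refinement_self[OF B0(1)], of lam "SD T n lam B0 + \<epsilon>"] \<epsilon> by auto
  have AU: "open_refinement T n A U"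
    using B0(1) U(1) by (rule open_refinement_trans)
  show ?thesis
  proof (rule that[OF AU])
    show "\<sigma> - \<epsilon> < SD T n lam U"
      using B0(2) SD_mono_open_refinement[OF bounded[OF B0(1)] U(1)] by simp
    fix V assume UV: "open_refinement T n U V"
    show "SD T n lam V \<le> \<sigma> - \<epsilon> + \<epsilon>"
      using SD_le_\<sigma>[OF open_refinement_trans[OF AU UV]] by simp
    have "diameter (msum n lam V) \<le> diameter (msum n lam U)"
      using msum_open_refinement_subset[OF UV] bounded[OF AU] by (rule diameter_subset)
    moreover have "SD T n lam B0 \<le> SD T n lam V"
      using bounded[OF B0(1)] open_refinement_trans[OF U(1) UV] by (rule SD_mono_open_refinement)
    ultimately show "diameter (msum n lam V) \<le> SD T n lam V + \<epsilon>"
      using U(2) by simp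
  qed
qed

lemma open_refinement_away_from_finite:
  fixes D :: "'a::real_normed_vector set"
  assumes weak: "\<forall>U. openin (subtopology weak_topology D) U \<longrightarrow> openin T U"
    and lam: "lam \<in> simplex_l1 n" and "finite F"
    and "open_refinement T n A A" "\<And>i. i < n \<Longrightarrow> A i \<subseteq> D" "bounded (msum n lam A)"
    and "s < SD T n lam A"
  shows "\<exists>B. open_refinement T n A B \<and> (\<forall>x\<in>F. \<forall>z\<in>msum n lam B. s / 2 < dist z x)"
  using assms(3-)
proof (induction F arbitrary: A rule: finite_induct)
  case empty
  then show ?case
    by blast
next
  case (insert x F)
  have "s < diameter (msum n lam A)"
    using insert.prems(4) SD_le_diameter[OF insert.prems(1,3)] by simp
  moreover have "msum n lam A \<noteq> {}"
    using insert.prems(1) unfolding open_refinement_self_iff by (intro msum_nonempty) blast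
  ultimately obtain y where y: "y \<in> msum n lam A" "s / 2 < dist y x"
    using exists_far_point_of_diameter by blast
  obtain B where AB: "open_refinement T n A B"
    and far: "\<And>z. z \<in> msum n lam B \<Longrightarrow> s / 2 < dist z x"
    using open_refinement_away_from_point[OF weak lam insert.prems(2) y] by blast
  have "\<And>i. i < n \<Longrightarrow> B i \<subseteq> D"
    using open_refinement_subset[OF AB] insert.prems(2) by blast
  moreover have "s < SD T n lam B"
    using SD_mono_open_refinement[OF insert.prems(3) AB] insert.prems(4) by simp
  ultimately obtain V where BV: "open_refinement T n B V"
    and far_F: "\<forall>x\<in>F. \<forall>z\<in>msum n lam V. s / 2 < dist z x"
    using insert.IH[OF open_refinement_self[OF AB] _
        bounded_msum_open_refinement[OF insert.prems(3) AB]]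
    by blast
  have "\<forall>z\<in>msum n lam V. s / 2 < dist z x"
    using far msum_open_refinement_subset[OF BV] by blast
  then show ?case
    using open_refinement_trans[OF AB BV] far_F by blast
qed

theorem lemma2p4:
  fixes D C :: "'a::banach set"
    and \<tau> :: "'a topology"
    and \<epsilon> :: real and n :: nat and lam :: "nat \<Rightarrow> real"
    and F :: "'a set"
    and Ot :: "nat \<Rightarrow> 'a set"
  assumes "closed D" "bounded D" "convex D"
    and "topspace \<tau> = D"
    and "locally_convex_top \<tau>"
    and "\<forall>U. openin (subtopology weak_topology D) U \<longrightarrow> openin \<tau> U"
    and "convex C" "C \<subseteq> D"
    and "\<epsilon> > 0"
    and "lam \<in> simplex_l1 n"
    and "finite F" "F \<noteq> {}"
    and "\<forall>i<n. Ot i \<noteq> {} \<and> openin (subtopology \<tau> C) (Ot i)"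
  shows "\<exists>Os. (\<forall>i<n. Os i \<noteq> {} \<and> openin (subtopology \<tau> (Ot i)) (Os i))
           \<and> diameter (msum n lam Os) \<le> SD \<tau> n lam Os + \<epsilon>
           \<and> setdist F (msum n lam Os) \<ge> SD \<tau> n lam Os / 2 - \<epsilon>"
proof -
  have Ot: "open_refinement \<tau> n Ot Ot"
    using assms(13) openin_subset[of "subtopology \<tau> C"]
    by (fastforce simp: open_refinement_self_iff)
  have Ot_D: "\<And>i. i < n \<Longrightarrow> Ot i \<subseteq> D"
    using open_refinement_topspace[OF Ot] assms(4) by simp
  have bounded: "bounded (msum n lam Ot)"
    using msum_subset_convex[OF assms(10,3) Ot_D] assms(2) by (rule bounded_subset[rotated])
  obtain U s where U: "open_refinement \<tau> n Ot U" "s < SD \<tau> n lam U"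
    and SD_le: "\<And>V. open_refinement \<tau> n U V \<Longrightarrow> SD \<tau> n lam V \<le> s + \<epsilon>"
    and diameter_le: "\<And>V. open_refinement \<tau> n U V \<Longrightarrow> diameter (msum n lam V) \<le> SD \<tau> n lam V + \<epsilon>"
    using open_refinement_SD_almost_stable[OF Ot bounded assms(9)] by blast
  have U_D: "\<And>i. i < n \<Longrightarrow> U i \<subseteq> D"
    using open_refinement_subset[OF U(1)] Ot_D by blast
  obtain V where UV: "open_refinement \<tau> n U V"
    and far: "\<forall>x\<in>F. \<forall>z\<in>msum n lam V. s / 2 < dist z x"
    using open_refinement_away_from_finite[OF assms(6,10,11) open_refinement_self[OF U(1)] U_D
        bounded_msum_open_refinement[OF bounded U(1)] U(2)]
    by blast
  have "msum n lam V \<noteq> {}"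
    using open_refinement_self[OF UV] unfolding open_refinement_self_iff
    by (intro msum_nonempty) blast
  then have "SD \<tau> n lam V / 2 - \<epsilon> \<le> setdist F (msum n lam V)"
    unfolding le_setdist_iff using far SD_le[OF UV] assms(9,12) by (force simp: dist_commute)
  then show ?thesis
    using open_refinement_trans[OF U(1) UV] diameter_le[OF UV]
    unfolding open_refinement_def by blast
qed

end
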